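(* Let $X$ and $Y$ be nonempty compact Hausdorff spaces, and let $E$ be a complex locally convex space with $E\neq\{0_E\}$. Suppose $T:C(X,E)\to C(Y,E)$ is a map (not assumed linear) such that $$\operatorname{Ran}(TF-TG)\subset \operatorname{Ran}(F-G)\quad\text{for all } F,G\in C(X,E).$$ Then there exists a continuous map $\varphi:Y\to X$ such that $$TF=T(1\otimes 0_E)+F\circ\varphi\quad\text{for all } F\in C(X,E).$$ In particular, if in addition $T(1\otimes 0_E)=1\otimes 0_E$, then $T$ is linear.
   Context: A locally convex space is a complex vector space with a Hausdorff topology making addition and scalar multiplication continuous and having a basis of neighborhoods of $0_E$ consisting of convex sets. $C(X,E)$ denotes the complex vector space (pointwise operations) of all continuous functions $X\to E$. For $F\in C(X,E)$, $\operatorname{Ran}(F)=\{F(x):x\in X\}$. For $f\in C(X)$ (continuous complex-valued functions on $X$) and $u\in E$, $f\otimes u:X\to E$ is the function $x\mapsto f(x)u$; thus $1\otimes 0_E$ is the constant function with value $0_E$. *)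

theory Defs
  imports "HOL-Analysis.Analysis"
begin

text \<open>A complex vector space structure on a type is given by an explicit scalar
multiplication smul (the library has no complex vector space class); the topology
of E is the type-class topology of the carrier type.\<close>

definition cconvex :: "(complex \<Rightarrow> 'e::ab_group_add \<Rightarrow> 'e) \<Rightarrow> 'e set \<Rightarrow> bool" where
  "cconvex smul V \<longleftrightarrow>
     (\<forall>x\<in>V. \<forall>y\<in>V. \<forall>t::real. 0 \<le> t \<and> t \<le> 1 \<longrightarrow>
        smul (complex_of_real t) x + smul (complex_of_real (1 - t)) y \<in> V)"

definition locally_convex_space ::
  "(complex \<Rightarrow> 'e::{ab_group_add,topological_space} \<Rightarrow> 'e) \<Rightarrow> bool" where
  "locally_convex_space smul \<longleftrightarrow>
     Vector_Spaces.vector_space smul \<and>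
     (\<forall>x y::'e. x \<noteq> y \<longrightarrow> (\<exists>U V. open U \<and> open V \<and> x \<in> U \<and> y \<in> V \<and> U \<inter> V = {})) \<and>
     continuous_on UNIV (\<lambda>p::'e \<times> 'e. fst p + snd p) \<and>
     continuous_on UNIV (\<lambda>p::complex \<times> 'e. smul (fst p) (snd p)) \<and>
     (\<forall>W. open W \<and> (0::'e) \<in> W \<longrightarrow>
        (\<exists>V. cconvex smul V \<and> 0 \<in> interior V \<and> V \<subseteq> W))"

definition CXE :: "'a topology \<Rightarrow> ('a \<Rightarrow> 'e::topological_space) set" where
  "CXE X = {F. continuous_map X euclidean F}"

definition Ran :: "'a topology \<Rightarrow> ('a \<Rightarrow> 'e) \<Rightarrow> 'e set" where
  "Ran X F = F ` topspace X"

end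

theory Submission
  imports Defs
begin

text \<open>
  For fixed y the functional L F = T F y - T 0 y satisfies L F - L G \<in> Ran (F - G), and every
  such functional on C(X,E) is evaluation at a point \<phi> y.

  For complex scalars, L u is a value of u, and for real u, v even L (u + i v) = L u + i L v with
  both parts attained at one common point. Hence L (max |b_k|) = 0 whenever all L b_k = 0, so
  the zero sets of real functions in the kernel of L have the finite intersection property, and
  a point of their intersection represents L.

  For E-valued functions, the scalar case applied to the functions h e (e \<noteq> 0 fixed) gives the
  point x0. If L F = 0 but F x0 lies off a long segment c [-1,1] e, adding c u e to F, where u is
  an Urysohn function with u x0 = 0 and u = 1 wherever F is on the segment, yields two values
  s e and (s - c) e of F; this is impossible because the compact range of F meets the line
  \<complex> e in a bounded set. As segments in the independent directions e and i e meet only in 0,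
  F x0 = 0.

  Finally F \<circ> \<phi> = T F - T 0 is continuous for every F, and cozero sets of real functions form a
  base of the completely regular space X, so \<phi> is continuous.
\<close>

lemma continuous_map_Complex [continuous_intros]:
  "continuous_map X euclidean u \<Longrightarrow> continuous_map X euclidean v \<Longrightarrow>
    continuous_map X euclidean (\<lambda>x. Complex (u x) (v x))"
  by (simp add: continuous_map_atin tendsto_Complex)

lemma continuous_map_of_real [continuous_intros]:
  "continuous_map X euclidean f \<Longrightarrow> continuous_map X euclidean (\<lambda>x. of_real (f x) :: 'b::real_normed_algebra_1)"
  by (simp add: continuous_map_atin tendsto_of_real)

lemma continuous_map_mult [continuous_intros]:
  fixes f g :: "'a \<Rightarrow> 'b::real_normed_algebra"
  shows "continuous_map X euclidean f \<Longrightarrow> continuous_map X euclidean g \<Longrightarrow>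
    continuous_map X euclidean (\<lambda>x. f x * g x)"
  by (simp add: continuous_map_atin tendsto_mult)

lemma continuous_map_Re [continuous_intros]:
  "continuous_map X euclidean f \<Longrightarrow> continuous_map X euclidean (\<lambda>x. Re (f x))"
  by (simp add: continuous_map_atin tendsto_Re)

lemma continuous_map_Im [continuous_intros]:
  "continuous_map X euclidean f \<Longrightarrow> continuous_map X euclidean (\<lambda>x. Im (f x))"
  by (simp add: continuous_map_atin tendsto_Im)

lemma compact_Hausdorff_imp_completely_regular_space:
  "compact_space X \<Longrightarrow> Hausdorff_space X \<Longrightarrow> completely_regular_space X"
  by (simp add: compact_Hausdorff_or_regular_imp_normal_space normal_imp_completely_regular_space)

lemma continuous_map_cozero_preimages_open:
  assumes X: "completely_regular_space X" and \<phi>: "\<phi> \<in> topspace Y \<rightarrow> topspace X"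
    and cozero: "\<And>v. continuous_map X euclideanreal v \<Longrightarrow> openin Y {y \<in> topspace Y. v (\<phi> y) \<noteq> 0}"
  shows "continuous_map Y X \<phi>"
  unfolding continuous_map_def
proof (intro conjI allI impI \<phi>)
  fix U assume U: "openin X U"
  show "openin Y {y \<in> topspace Y. \<phi> y \<in> U}"
  proof (subst openin_subopen, intro ballI)
    fix y0 assume y0: "y0 \<in> {y \<in> topspace Y. \<phi> y \<in> U}"
    have "\<forall>S x. openin X S \<longrightarrow> x \<in> S \<longrightarrow>
        (\<exists>v. continuous_map X euclideanreal v \<and> v x = 1 \<and> v ` (topspace X - S) \<subseteq> {0})"
      using completely_regular_space_gen_alt'[OF one_neq_zero, of X] X by blast
    then obtain v where v: "continuous_map X euclideanreal v" "v (\<phi> y0) = 1" "v ` (topspace X - U) \<subseteq> {0}"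
      using U y0 by blast
    have "{y \<in> topspace Y. v (\<phi> y) \<noteq> 0} \<subseteq> {y \<in> topspace Y. \<phi> y \<in> U}"
      using v(3) \<phi> by auto
    with cozero[OF v(1)] v(2) y0
    show "\<exists>V. openin Y V \<and> y0 \<in> V \<and> V \<subseteq> {y \<in> topspace Y. \<phi> y \<in> U}"
      by (intro exI[of _ "{y \<in> topspace Y. v (\<phi> y) \<noteq> 0}"]) auto
  qed
qed

context
  fixes smul :: "complex \<Rightarrow> 'e::{ab_group_add,topological_space} \<Rightarrow> 'e"
  assumes lcs: "locally_convex_space smul"
begin

lemma lcs_vector_space: "Vector_Spaces.vector_space smul"
  using lcs by (simp add: locally_convex_space_def)

lemma lcs_Hausdorff_space: "Hausdorff_space (euclidean :: 'e topology)"
  using lcs unfolding locally_convex_space_def Hausdorff_space_def disjnt_def by auto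

lemma lcs_closed_singleton: "closed {e::'e}"
proof -
  have "closedin euclidean {e}"
    by (rule closedin_Hausdorff_singleton[OF lcs_Hausdorff_space]) simp
  then show ?thesis
    unfolding closed_closedin .
qed

lemma continuous_map_lcs_add:
  assumes "continuous_map X euclidean F" "continuous_map X euclidean (G :: _ \<Rightarrow> 'e)"
  shows "continuous_map X euclidean (\<lambda>x. F x + G x)"
proof -
  have "continuous_map (prod_topology euclidean euclidean) euclidean (\<lambda>p::'e \<times> 'e. fst p + snd p)"
    using lcs by (simp add: locally_convex_space_def)
  from continuous_map_compose[OF continuous_map_pairedI[OF assms] this]
  show ?thesis by (simp add: o_def)
qed

lemma continuous_map_lcs_scale:
  assumes "continuous_map X euclidean h" "continuous_map X euclidean (F :: _ \<Rightarrow> 'e)"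
  shows "continuous_map X euclidean (\<lambda>x. smul (h x) (F x))"
proof -
  have "continuous_map (prod_topology euclidean euclidean) euclidean (\<lambda>p::complex \<times> 'e. smul (fst p) (snd p))"
    using lcs by (simp add: locally_convex_space_def)
  from continuous_map_compose[OF continuous_map_pairedI[OF assms] this]
  show ?thesis by (simp add: o_def)
qed

lemma continuous_map_lcs_diff:
  assumes "continuous_map X euclidean F" "continuous_map X euclidean (G :: _ \<Rightarrow> 'e)"
  shows "continuous_map X euclidean (\<lambda>x. F x - G x)"
proof -
  interpret vector_space smul
    by (rule lcs_vector_space)
  have "continuous_map X euclidean (\<lambda>x. F x + smul (-1) (G x))"
    by (intro continuous_map_lcs_add continuous_map_lcs_scale assms) simp
  then show ?thesis
    by (simp add: scale_minus_left)
qed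

lemma lcs_compact_line_bounded:
  assumes K: "compact K" and e: "e \<noteq> 0"
  obtains R where "R \<ge> 0" "\<And>c. smul c e \<in> K \<Longrightarrow> norm c \<le> R"
proof -
  interpret vector_space smul
    by (rule lcs_vector_space)
  define g where "g = (\<lambda>p::complex \<times> 'e. smul (fst p) (snd p))"
  have "continuous_on UNIV g"
    using lcs unfolding locally_convex_space_def g_def by blast
  then have W: "open (g -` (- {e}))"
    by (rule continuous_imp_open_vimage[OF _ open_UNIV open_Compl[OF lcs_closed_singleton]]) simp
  moreover have "{0} \<times> K \<subseteq> g -` (- {e})"
    using e by (auto simp: g_def)
  ultimately obtain N where N: "0 \<in> N" "open N" "N \<times> K \<subseteq> g -` (- {e})"
    using Elementary_Topology.tube_lemma[OF K W] by blast
  then obtain d where d: "d > 0" "ball 0 d \<subseteq> N"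
    using open_contains_ball by blast
  have "norm c \<le> 1/d" if c: "smul c e \<in> K" for c
  proof (rule ccontr)
    assume "\<not> norm c \<le> 1/d"
    then have "c \<noteq> 0" "1/d < norm c"
      using d(1) by auto
    then have "norm (1/c) < d"
      using d(1) by (simp add: norm_divide divide_less_eq mult.commute)
    then have "1/c \<in> N"
      using d(2) by auto
    then have "(1/c, smul c e) \<in> g -` (- {e})"
      using N(3) c by blast
    then show False
      using \<open>c \<noteq> 0\<close> by (simp add: g_def)
  qed
  with d(1) show thesis
    by (intro that[of "1/d"]) auto
qed

lemma lcs_compact_segment: "compact ((\<lambda>s. smul (c * of_real s) e) ` {-1..1})"
proof -
  have "continuous_map (top_of_set {-1..1}) euclidean (\<lambda>s::real. smul (c * of_real s) e)"
    by (intro continuous_map_lcs_scale) (auto intro!: continuous_intros)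
  then show ?thesis
    by (intro compact_continuous_image) auto
qed

lemma continuous_map_if_comp_CXE:
  fixes e :: 'e
  assumes e: "e \<noteq> 0"
    and X: "completely_regular_space X" and \<phi>: "\<phi> \<in> topspace Y \<rightarrow> topspace X"
    and comp: "\<And>F :: 'a \<Rightarrow> 'e. continuous_map X euclidean F \<Longrightarrow> continuous_map Y euclidean (F \<circ> \<phi>)"
  shows "continuous_map Y X \<phi>"
proof (rule continuous_map_cozero_preimages_open[OF X \<phi>])
  interpret vector_space smul
    by (rule lcs_vector_space)
  fix v :: "'a \<Rightarrow> real"
  assume "continuous_map X euclidean v"
  then have "continuous_map X euclidean (\<lambda>x. smul (of_real (v x)) e)"
    by (intro continuous_map_lcs_scale continuous_map_of_real) simp_all
  then have "openin Y {y \<in> topspace Y. ((\<lambda>x. smul (of_real (v x)) e) \<circ> \<phi>) y \<in> - {0}}"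
    by (intro openin_continuous_map_preimage[OF comp])
      (use open_Compl[OF lcs_closed_singleton] in auto)
  then show "openin Y {y \<in> topspace Y. v (\<phi> y) \<noteq> 0}"
    using e by simp
qed

end

definition ran_diff_preserving ::
    "'a topology \<Rightarrow> (('a \<Rightarrow> 'e::{ab_group_add,topological_space}) \<Rightarrow> 'e) \<Rightarrow> bool" where
  "ran_diff_preserving X L \<longleftrightarrow>
     (\<forall>F\<in>CXE X. \<forall>G\<in>CXE X. L F - L G \<in> Ran X (\<lambda>x. F x - G x))"

lemma ran_diff_preservingD:
  assumes "ran_diff_preserving X L" "continuous_map X euclidean F" "continuous_map X euclidean G"
  obtains x where "x \<in> topspace X" "L F - L G = F x - G x"
  using assms by (auto simp: ran_diff_preserving_def Ran_def CXE_def)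

lemma ran_diff_preserving_diff_const:
  "ran_diff_preserving X L \<Longrightarrow> ran_diff_preserving X (\<lambda>F. L F - c)"
  by (simp add: ran_diff_preserving_def)

locale scalar_ran_diff_functional =
  fixes X :: "'a topology" and l :: "('a \<Rightarrow> complex) \<Rightarrow> complex"
  assumes compact: "compact_space X"
    and preserving: "ran_diff_preserving X l"
    and zero: "l (\<lambda>x. 0) = 0"
begin

lemma value_attained:
  assumes "continuous_map X euclidean f"
  obtains x where "x \<in> topspace X" "l f = f x"
  using ran_diff_preservingD[OF preserving assms continuous_map_const[THEN iffD2], of 0] zero
  by auto

definition lreal :: "('a \<Rightarrow> real) \<Rightarrow> real" where
  "lreal b = Re (l (\<lambda>x. Complex (b x) 0))"

lemma l_real:
  assumes "continuous_map X euclidean b"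
  shows "l (\<lambda>x. Complex (b x) 0) = Complex (lreal b) 0"
proof -
  have "continuous_map X euclidean (\<lambda>x. Complex (b x) 0)"
    by (intro continuous_intros assms)
  then obtain x where "l (\<lambda>x. Complex (b x) 0) = Complex (b x) 0"
    using value_attained by blast
  then show ?thesis
    by (simp add: lreal_def complex_eq_iff)
qed

lemma lreal_zero: "lreal (\<lambda>x. 0) = 0"
  using zero by (simp add: lreal_def zero_complex.code)

lemma Re_l_Complex:
  assumes u: "continuous_map X euclidean u" and v: "continuous_map X euclidean v"
  shows "Re (l (\<lambda>x. Complex (u x) (v x))) = lreal u"
proof -
  have "continuous_map X euclidean (\<lambda>x. Complex (u x) (v x))"
    "continuous_map X euclidean (\<lambda>x. Complex (u x) 0)"
    by (intro continuous_intros u v)+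
  then obtain x where "l (\<lambda>x. Complex (u x) (v x)) - l (\<lambda>x. Complex (u x) 0) = Complex 0 (v x)"
    by (rule ran_diff_preservingD[OF preserving]) (simp add: complex_eq_iff)
  then have "Re (l (\<lambda>x. Complex (u x) (v x))) = Re (l (\<lambda>x. Complex (u x) 0))"
    by (simp add: complex_eq_iff)
  then show ?thesis
    using l_real[OF u] by simp
qed

lemma Im_l_Complex:
  assumes u: "continuous_map X euclidean u" and v: "continuous_map X euclidean v"
  shows "Im (l (\<lambda>x. Complex (u x) (v x))) = Im (l (\<lambda>x. Complex 0 (v x)))"
proof -
  have "continuous_map X euclidean (\<lambda>x. Complex (u x) (v x))"
    "continuous_map X euclidean (\<lambda>x. Complex 0 (v x))"
    by (intro continuous_intros u v)+
  then obtain x where "l (\<lambda>x. Complex (u x) (v x)) - l (\<lambda>x. Complex 0 (v x)) = Complex (u x) 0"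
    by (rule ran_diff_preservingD[OF preserving]) (simp add: complex_eq_iff)
  then show ?thesis
    by (simp add: complex_eq_iff)
qed

lemma l_Complex:
  assumes u: "continuous_map X euclidean u" and v: "continuous_map X euclidean v"
  shows "l (\<lambda>x. Complex (u x) (v x)) = Complex (lreal u) (lreal v)"
proof -
  have "continuous_map X euclidean (\<lambda>x. Complex (v x) (v x))"
    by (intro continuous_intros v)
  \<comment> \<open>on the diagonal the value is attained at a point, so its real and imaginary parts agree\<close>
  then obtain x where "l (\<lambda>x. Complex (v x) (v x)) = Complex (v x) (v x)"
    using value_attained by blast
  then have "Im (l (\<lambda>x. Complex 0 (v x))) = lreal v"
    using Re_l_Complex[OF v v] Im_l_Complex[OF v v] by simp
  then show ?thesis
    using Re_l_Complex[OF u v] Im_l_Complex[OF u v] by (simp add: complex_eq_iff)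
qed

lemma joint_value_attained:
  assumes u: "continuous_map X euclidean u" and v: "continuous_map X euclidean v"
  obtains x where "x \<in> topspace X" "u x = lreal u" "v x = lreal v"
proof -
  have "continuous_map X euclidean (\<lambda>x. Complex (u x) (v x))"
    by (intro continuous_intros u v)
  then obtain x where "x \<in> topspace X" "l (\<lambda>x. Complex (u x) (v x)) = Complex (u x) (v x)"
    using value_attained by blast
  with l_Complex[OF u v] that show thesis
    by simp
qed

lemma lreal_abs_eq_0:
  assumes b: "continuous_map X euclidean b" and "lreal b = 0"
  shows "lreal (\<lambda>x. \<bar>b x\<bar>) = 0"
proof -
  obtain x where "x \<in> topspace X" "b x = lreal b" "\<bar>b x\<bar> = lreal (\<lambda>x. \<bar>b x\<bar>)"
    by (rule joint_value_attained[OF b continuous_map_real_abs[OF b]])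
  with \<open>lreal b = 0\<close> show ?thesis
    by simp
qed

lemma lreal_max_eq_0:
  assumes p: "continuous_map X euclidean p" "lreal p = 0"
    and q: "continuous_map X euclidean q" "lreal q = 0"
  shows "lreal (\<lambda>x. max (p x) (q x)) = 0"
proof -
  define m where "m = (\<lambda>x. max (p x) (q x))"
  have m: "continuous_map X euclidean m"
    unfolding m_def by (intro continuous_map_real_max p q)
  have "continuous_map X euclidean (\<lambda>x. Complex (p x) (q x))"
    "continuous_map X euclidean (\<lambda>x. Complex (m x) (m x))"
    by (intro continuous_intros p(1) q(1) m)+
  then obtain x where "l (\<lambda>x. Complex (p x) (q x)) - l (\<lambda>x. Complex (m x) (m x))
      = Complex (p x) (q x) - Complex (m x) (m x)"
    by (rule ran_diff_preservingD[OF preserving])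
  then have "p x = m x - lreal m" "q x = m x - lreal m"
    using l_Complex[OF p(1) q(1)] l_Complex[OF m m] p(2) q(2) by (simp_all add: complex_eq_iff)
  moreover have "m x = p x \<or> m x = q x"
    by (simp add: m_def max_def)
  ultimately show ?thesis
    unfolding m_def[symmetric] by auto
qed

lemma finite_common_zero:
  assumes "finite B" "\<And>b. b \<in> B \<Longrightarrow> continuous_map X euclidean b \<and> lreal b = 0"
  obtains x where "x \<in> topspace X" "\<And>b. b \<in> B \<Longrightarrow> b x = 0"
proof -
  have "\<exists>m. continuous_map X euclidean m \<and> lreal m = 0 \<and> (\<forall>x. m x = 0 \<longrightarrow> (\<forall>b\<in>B. b x = 0))"
    using assms
  proof (induction B rule: finite_induct)
    case empty
    show ?case
      using lreal_zero by (intro exI[of _ "\<lambda>x. 0"]) simp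
  next
    case (insert c B)
    then obtain m where m: "continuous_map X euclidean m" "lreal m = 0"
      "\<forall>x. m x = 0 \<longrightarrow> (\<forall>b\<in>B. b x = 0)"
      by blast
    have c: "continuous_map X euclidean c" "lreal c = 0"
      using insert.prems by auto
    show ?case
    proof (intro exI conjI)
      show "continuous_map X euclidean (\<lambda>x. max \<bar>m x\<bar> \<bar>c x\<bar>)"
        by (intro continuous_intros m c)
      show "lreal (\<lambda>x. max \<bar>m x\<bar> \<bar>c x\<bar>) = 0"
        by (intro lreal_max_eq_0 lreal_abs_eq_0 continuous_intros m c)
    qed (use m(3) in auto)
  qed
  then obtain m where m: "continuous_map X euclidean m" "lreal m = 0"
    "\<forall>x. m x = 0 \<longrightarrow> (\<forall>b\<in>B. b x = 0)"
    by blast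
  obtain x where "x \<in> topspace X" "m x = lreal m"
    using joint_value_attained[OF m(1) m(1)] by blast
  with m(2,3) show thesis
    by (intro that[of x]) auto
qed

lemma common_zero:
  obtains x0 where "x0 \<in> topspace X"
    "\<And>b. continuous_map X euclidean b \<Longrightarrow> lreal b = 0 \<Longrightarrow> b x0 = 0"
proof -
  define Z where "Z b = {x \<in> topspace X. b x \<in> {0::real}}" for b
  define \<U> where "\<U> = Z ` {b. continuous_map X euclidean b \<and> lreal b = 0}"
  have "closedin X (Z b)" if "continuous_map X euclidean b" for b
    unfolding Z_def using that closed_closedin closed_singleton
    by (rule closedin_continuous_map_preimage[OF _ iffD1])
  then have closed: "\<forall>C\<in>\<U>. closedin X C"
    by (auto simp: \<U>_def)
  have fip: "\<forall>\<F>. finite \<F> \<and> \<F> \<subseteq> \<U> \<longrightarrow> \<Inter>\<F> \<noteq> {}"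
  proof (intro allI impI)
    fix \<F> assume "finite \<F> \<and> \<F> \<subseteq> \<U>"
    then obtain B where B: "B \<subseteq> {b. continuous_map X euclidean b \<and> lreal b = 0}" "finite B" "\<F> = Z ` B"
      using finite_subset_image[of \<F> Z "{b. continuous_map X euclidean b \<and> lreal b = 0}"]
      unfolding \<U>_def by blast
    obtain x where x: "x \<in> topspace X" "\<And>b. b \<in> B \<Longrightarrow> b x = 0"
      using finite_common_zero[OF B(2)] B(1) by blast
    have "x \<in> \<Inter>\<F>"
      using x B(3) by (auto simp: Z_def)
    then show "\<Inter>\<F> \<noteq> {}"
      by blast
  qed
  obtain x0 where x0: "x0 \<in> \<Inter>\<U>"
    using compact[unfolded compact_space_fip, rule_format, OF conjI[OF closed fip]] by blast
  have "Z (\<lambda>x. 0) \<in> \<U>"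
    unfolding \<U>_def using lreal_zero by simp
  show thesis
  proof (rule that)
    show "x0 \<in> topspace X"
      using x0 \<open>Z (\<lambda>x. 0) \<in> \<U>\<close> by (auto simp: Z_def)
    fix b :: "'a \<Rightarrow> real"
    assume "continuous_map X euclidean b" "lreal b = 0"
    then have "Z b \<in> \<U>"
      by (simp add: \<U>_def)
    with x0 show "b x0 = 0"
      by (auto simp: Z_def)
  qed
qed

theorem eval_point:
  obtains x0 where "x0 \<in> topspace X" "\<And>f. continuous_map X euclidean f \<Longrightarrow> l f = f x0"
proof -
  obtain x0 where x0: "x0 \<in> topspace X"
    "\<And>b. continuous_map X euclidean b \<Longrightarrow> lreal b = 0 \<Longrightarrow> b x0 = 0"
    by (rule common_zero) blast
  have "l f = f x0" if f: "continuous_map X euclidean f" for f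
  proof -
    define g where "g x = f x - l f" for x
    have g: "continuous_map X euclidean g"
      unfolding g_def by (intro continuous_intros f)
    obtain x where "l f - l g = f x - g x"
      by (rule ran_diff_preservingD[OF preserving f g])
    then have "l g = 0"
      by (simp add: g_def)
    have u: "continuous_map X euclidean (\<lambda>x. Re (g x))"
      and v: "continuous_map X euclidean (\<lambda>x. Im (g x))"
      by (intro continuous_intros g)+
    have "(\<lambda>x. Complex (Re (g x)) (Im (g x))) = g"
      by simp
    with l_Complex[OF u v] \<open>l g = 0\<close>
    have "lreal (\<lambda>x. Re (g x)) = 0" "lreal (\<lambda>x. Im (g x)) = 0"
      by (simp_all add: complex_eq_iff)
    then have "g x0 = 0"
      using x0(2)[OF u] x0(2)[OF v] by (simp add: complex_eq_iff)
    then show ?thesis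
      by (simp add: g_def)
  qed
  then show thesis
    by (rule that[OF x0(1)])
qed

end

locale ran_diff_functional =
  fixes X :: "'a topology" and smul :: "complex \<Rightarrow> 'e::{ab_group_add,topological_space} \<Rightarrow> 'e"
    and L :: "('a \<Rightarrow> 'e) \<Rightarrow> 'e" and e :: 'e
  assumes lcs: "locally_convex_space smul" and e: "e \<noteq> 0"
    and compact: "compact_space X" and Hausdorff: "Hausdorff_space X"
    and preserving: "ran_diff_preserving X L"
    and zero: "L (\<lambda>x. 0) = 0"
begin

sublocale vs: vector_space smul
  by (rule lcs_vector_space[OF lcs])

definition lift :: "('a \<Rightarrow> complex) \<Rightarrow> 'a \<Rightarrow> 'e" where
  "lift h x = smul (h x) e"

lemma continuous_map_lift:
  "continuous_map X euclidean h \<Longrightarrow> continuous_map X euclidean (lift h)"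
  unfolding lift_def[abs_def] by (intro continuous_map_lcs_scale[OF lcs]) simp_all

definition coeff :: "('a \<Rightarrow> complex) \<Rightarrow> complex" where
  "coeff h = (SOME c. L (lift h) = smul c e)"

lemma L_lift:
  assumes "continuous_map X euclidean h"
  shows "L (lift h) = smul (coeff h) e"
proof -
  obtain x where "L (lift h) = lift h x"
    using ran_diff_preservingD[OF preserving continuous_map_lift[OF assms] continuous_map_const[THEN iffD2], of 0]
      zero by auto
  then have "\<exists>c. L (lift h) = smul c e"
    by (auto simp: lift_def)
  then show ?thesis
    unfolding coeff_def by (rule someI_ex)
qed

lemma scalar_ran_diff_functional_coeff: "scalar_ran_diff_functional X coeff"
proof
  show "compact_space X"
    by (rule compact)
  show "ran_diff_preserving X coeff"
    unfolding ran_diff_preserving_def Ran_def CXE_def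
  proof (intro ballI, unfold mem_Collect_eq)
    fix f g :: "'a \<Rightarrow> complex"
    assume f: "continuous_map X euclidean f" and g: "continuous_map X euclidean g"
    obtain x where "x \<in> topspace X" "L (lift f) - L (lift g) = lift f x - lift g x"
      by (rule ran_diff_preservingD[OF preserving continuous_map_lift[OF f] continuous_map_lift[OF g]])
    then have "x \<in> topspace X" "smul (coeff f - coeff g) e = smul (f x - g x) e"
      by (simp_all add: L_lift f g lift_def vs.scale_left_diff_distrib)
    with e show "coeff f - coeff g \<in> (\<lambda>x. f x - g x) ` topspace X"
      by auto
  qed
  have "lift (\<lambda>x. 0) = (\<lambda>x. 0)"
    by (simp add: lift_def[abs_def])
  then show "coeff (\<lambda>x. 0) = 0"
    using L_lift[of "\<lambda>x. 0"] zero e by simp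
qed

lemma eval_point_on_line:
  obtains x0 where "x0 \<in> topspace X" "\<And>h. continuous_map X euclidean h \<Longrightarrow> L (lift h) = lift h x0"
proof -
  obtain x0 where "x0 \<in> topspace X" "\<And>h. continuous_map X euclidean h \<Longrightarrow> coeff h = h x0"
    by (rule scalar_ran_diff_functional.eval_point[OF scalar_ran_diff_functional_coeff]) blast
  with that show thesis
    by (simp add: L_lift lift_def)
qed

lemma Urysohn_perturbation_norm_le:
  fixes u :: "'a \<Rightarrow> real"
  assumes x0: "\<forall>h. continuous_map X euclidean h \<longrightarrow> L (lift h) = lift h x0"
    and F: "continuous_map X euclidean F" "L F = 0"
    and R: "\<And>c. smul c e \<in> F ` topspace X \<Longrightarrow> norm c \<le> R"
    and u: "continuous_map X (top_of_set {0..1}) u" "u x0 = 0"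
      "\<And>x. x \<in> topspace X \<Longrightarrow> F x \<in> (\<lambda>s. smul (c * of_real s) e) ` {-1..1} \<Longrightarrow> u x = 1"
  shows "norm c \<le> 2 * R"
proof -
  have u01: "u x \<in> {0..1}" if "x \<in> topspace X" for x
    using u(1) that by (auto simp: continuous_map_in_subtopology)
  have "continuous_map X euclidean u"
    using u(1) by (simp add: continuous_map_in_subtopology)
  define h where "h x = c * of_real (u x)" for x
  have h: "continuous_map X euclidean h"
    unfolding h_def by (intro continuous_intros \<open>continuous_map X euclidean u\<close>)
  define G where "G x = F x + lift h x" for x
  have G: "continuous_map X euclidean G"
    unfolding G_def by (intro continuous_map_lcs_add[OF lcs] F(1) continuous_map_lift h)
  obtain x1 where x1: "x1 \<in> topspace X" "L G - L F = G x1 - F x1"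
    by (rule ran_diff_preservingD[OF preserving G F(1)])
  have LG: "L G = smul (h x1) e"
    using x1(2) F(2) by (simp add: G_def lift_def)
  \<comment> \<open>comparing G with lift h shows that L G is a value of F\<close>
  obtain x2 where "x2 \<in> topspace X" "L G - L (lift h) = G x2 - lift h x2"
    by (rule ran_diff_preservingD[OF preserving G continuous_map_lift[OF h]])
  then have "smul (h x1) e \<in> F ` topspace X"
    using LG x0 h u(2) by (simp add: G_def lift_def h_def)
  then have n1: "norm (h x1) \<le> R"
    by (rule R)
  \<comment> \<open>comparing G with 0 produces a value of F on the segment, hence a point where u = 1\<close>
  obtain x3 where x3: "x3 \<in> topspace X" "L G - L (\<lambda>x. 0) = G x3 - 0"
    by (rule ran_diff_preservingD[OF preserving G continuous_map_const[THEN iffD2]]) simp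
  then have F3: "F x3 = smul (c * of_real (u x1 - u x3)) e"
    using LG zero by (simp add: G_def lift_def h_def vs.scale_left_diff_distrib algebra_simps)
  moreover have "u x1 - u x3 \<in> {-1..1}"
    using u01[OF x1(1)] u01[OF x3(1)] by auto
  ultimately have "u x3 = 1"
    using u(3)[OF x3(1)] by blast
  with F3 have "F x3 = smul (h x1 - c) e"
    by (simp add: h_def algebra_simps)
  then have "smul (h x1 - c) e \<in> F ` topspace X"
    using x3(1) by (metis image_eqI)
  then have n2: "norm (h x1 - c) \<le> R"
    by (rule R)
  have "norm c \<le> norm (h x1) + norm (h x1 - c)"
    by (metis norm_triangle_sub add.commute norm_minus_commute)
  with n1 n2 show ?thesis
    by linarith
qed

lemma value_on_segment:
  assumes x0: "x0 \<in> topspace X" "\<forall>h. continuous_map X euclidean h \<longrightarrow> L (lift h) = lift h x0"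
    and F: "continuous_map X euclidean F" "L F = 0"
    and R: "\<And>c. smul c e \<in> F ` topspace X \<Longrightarrow> norm c \<le> R" and c: "2 * R < norm c"
  shows "F x0 \<in> (\<lambda>s. smul (c * of_real s) e) ` {-1..1}"
proof (rule ccontr)
  define S where "S = (\<lambda>s. smul (c * of_real s) e) ` {-1..1}"
  assume "F x0 \<notin> (\<lambda>s. smul (c * of_real s) e) ` {-1..1}"
  then have x0U: "x0 \<in> {x \<in> topspace X. F x \<in> - S}"
    using x0(1) by (simp add: S_def)
  have "closedin euclidean S"
    unfolding S_def using lcs_compact_segment[OF lcs]
    by (intro compactin_imp_closedin[OF lcs_Hausdorff_space[OF lcs]]) simp
  then have "closed S"
    unfolding closed_closedin .
  then have "openin X {x \<in> topspace X. F x \<in> - S}"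
    by (intro openin_continuous_map_preimage[OF F(1)]) (simp add: open_Compl)
  then have "closedin X (topspace X - {x \<in> topspace X. F x \<in> - S})"
    by (rule closedin_diff[OF closedin_topspace])
  then obtain u :: "'a \<Rightarrow> real" where u: "continuous_map X (top_of_set {0..1}) u" "u x0 = 0"
    "u ` (topspace X - {x \<in> topspace X. F x \<in> - S}) \<subseteq> {1}"
    using compact_Hausdorff_imp_completely_regular_space[OF compact Hausdorff] x0U
    unfolding completely_regular_space_def by blast
  have "norm c \<le> 2 * R"
  proof (rule Urysohn_perturbation_norm_le[OF x0(2) F R u(1,2)])
    fix x assume "x \<in> topspace X" "F x \<in> (\<lambda>s. smul (c * of_real s) e) ` {-1..1}"
    with u(3) show "u x = 1"
      by (auto simp: S_def)
  qed
  with c show False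
    by linarith
qed

lemma kernel_vanishes_at:
  assumes x0: "x0 \<in> topspace X" "\<forall>h. continuous_map X euclidean h \<longrightarrow> L (lift h) = lift h x0"
    and F: "continuous_map X euclidean F" "L F = 0"
  shows "F x0 = 0"
proof -
  have "compactin euclidean (F ` topspace X)"
    using image_compactin[OF _ F(1)] compact by (simp add: compact_space_def)
  then obtain R where R: "R \<ge> 0" "\<And>c. smul c e \<in> F ` topspace X \<Longrightarrow> norm c \<le> R"
    using lcs_compact_line_bounded[OF lcs _ e] by auto
  define r where "r = 2 * R + 1"
  have "2 * R < r" "0 < r"
    using R(1) by (simp_all add: r_def)
  then have r: "2 * R < norm (complex_of_real r)" and ir: "2 * R < norm (\<i> * complex_of_real r)"
    by (simp_all add: norm_mult)
  \<comment> \<open>F x0 lies on the segments through r e and through i r e, which meet only at 0\<close>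
  have "F x0 \<in> (\<lambda>s. smul (of_real r * of_real s) e) ` {-1..1}"
    by (rule value_on_segment[OF x0 F _ r]) (erule R(2))
  moreover have "F x0 \<in> (\<lambda>s. smul (\<i> * of_real r * of_real s) e) ` {-1..1}"
    by (rule value_on_segment[OF x0 F _ ir]) (erule R(2))
  ultimately obtain s t where "F x0 = smul (of_real r * of_real s) e" "F x0 = smul (\<i> * of_real r * of_real t) e"
    by blast
  then have "smul (of_real r * of_real s) e = smul (\<i> * of_real r * of_real t) e"
    by simp
  then have "complex_of_real r * of_real s = \<i> * of_real r * of_real t"
    using e by simp
  then have "r * s = 0"
    by (simp add: complex_eq_iff)
  with \<open>F x0 = smul (of_real r * of_real s) e\<close> show ?thesis
    by simp
qed

theorem eval_point:
  obtains x0 where "x0 \<in> topspace X" "\<And>F. continuous_map X euclidean F \<Longrightarrow> L F = F x0"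
proof -
  obtain x0 where x0: "x0 \<in> topspace X" "\<forall>h. continuous_map X euclidean h \<longrightarrow> L (lift h) = lift h x0"
    by (rule eval_point_on_line) blast
  have "L F = F x0" if F: "continuous_map X euclidean F" for F
  proof -
    define G where "G x = F x - L F" for x
    have G: "continuous_map X euclidean G"
      unfolding G_def by (intro continuous_map_lcs_diff[OF lcs] F) simp
    obtain x where "L F - L G = F x - G x"
      by (rule ran_diff_preservingD[OF preserving F G])
    then have "L G = 0"
      by (simp add: G_def)
    then have "G x0 = 0"
      by (rule kernel_vanishes_at[OF x0 G])
    then show ?thesis
      by (simp add: G_def)
  qed
  then show thesis
    by (rule that[OF x0(1)])
qed

end

lemma ran_diff_preserving_eval:
  fixes smul :: "complex \<Rightarrow> 'e::{ab_group_add,topological_space} \<Rightarrow> 'e"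
    and L :: "('a \<Rightarrow> 'e) \<Rightarrow> 'e" and e :: 'e
  assumes "locally_convex_space smul" "e \<noteq> 0" "compact_space X" "Hausdorff_space X"
    and "ran_diff_preserving X L"
  obtains x0 where "x0 \<in> topspace X"
    "\<And>F. continuous_map X euclidean F \<Longrightarrow> L F = L (\<lambda>x. 0) + F x0"
proof -
  interpret ran_diff_functional X smul "\<lambda>F. L F - L (\<lambda>x. 0)" e
    using assms by unfold_locales (simp_all add: ran_diff_preserving_diff_const)
  obtain x0 where x0: "x0 \<in> topspace X"
    "\<And>F. continuous_map X euclidean F \<Longrightarrow> L F - L (\<lambda>x. 0) = F x0"
    by (rule eval_point) blast
  show thesis
  proof (rule that[OF x0(1)])
    fix F :: "'a \<Rightarrow> 'e"
    assume "continuous_map X euclidean F"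
    then show "L F = L (\<lambda>x. 0) + F x0"
      by (metis x0(2) diff_add_cancel add.commute)
  qed
qed

lemma ran_diff_operator_pointwise_eval:
  fixes smul :: "complex \<Rightarrow> 'e::{ab_group_add,topological_space} \<Rightarrow> 'e"
    and T :: "('a \<Rightarrow> 'e) \<Rightarrow> 'b \<Rightarrow> 'e" and e :: 'e
  assumes lcs: "locally_convex_space smul" and e: "e \<noteq> 0"
    and X: "compact_space X" "Hausdorff_space X"
    and ran: "\<forall>F\<in>CXE X. \<forall>G\<in>CXE X. Ran Y (\<lambda>y. T F y - T G y) \<subseteq> Ran X (\<lambda>x. F x - G x)"
  obtains \<phi> where "\<phi> \<in> topspace Y \<rightarrow> topspace X"
    "\<And>F y. F \<in> CXE X \<Longrightarrow> y \<in> topspace Y \<Longrightarrow> T F y = T (\<lambda>x. 0) y + F (\<phi> y)"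
proof -
  have "\<forall>y\<in>topspace Y. \<exists>x. x \<in> topspace X \<and> (\<forall>F\<in>CXE X. T F y = T (\<lambda>x. 0) y + F x)"
  proof
    fix y assume y: "y \<in> topspace Y"
    have "ran_diff_preserving X (\<lambda>F. T F y)"
      unfolding ran_diff_preserving_def
    proof (intro ballI)
      fix F G :: "'a \<Rightarrow> 'e"
      assume "F \<in> CXE X" "G \<in> CXE X"
      moreover have "T F y - T G y \<in> Ran Y (\<lambda>y. T F y - T G y)"
        using y by (simp add: Ran_def)
      ultimately show "T F y - T G y \<in> Ran X (\<lambda>x. F x - G x)"
        using ran by blast
    qed
    then obtain x where "x \<in> topspace X"
      "\<And>F. continuous_map X euclidean F \<Longrightarrow> T F y = T (\<lambda>x. 0) y + F x"
      by (rule ran_diff_preserving_eval[OF lcs e X]) blast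
    then show "\<exists>x. x \<in> topspace X \<and> (\<forall>F\<in>CXE X. T F y = T (\<lambda>x. 0) y + F x)"
      unfolding CXE_def by blast
  qed
  then obtain \<phi> where "\<forall>y\<in>topspace Y. \<phi> y \<in> topspace X \<and> (\<forall>F\<in>CXE X. T F y = T (\<lambda>x. 0) y + F (\<phi> y))"
    by (auto dest!: bchoice)
  with that show thesis
    by blast
qed

theorem theorem1p1:
  fixes X :: "'a topology" and Y :: "'b topology"
    and smul :: "complex \<Rightarrow> 'e::{ab_group_add,topological_space} \<Rightarrow> 'e"
    and T :: "('a \<Rightarrow> 'e) \<Rightarrow> ('b \<Rightarrow> 'e)"
  assumes "topspace X \<noteq> {}" "compact_space X" "Hausdorff_space X"
    and "topspace Y \<noteq> {}" "compact_space Y" "Hausdorff_space Y"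
    and "locally_convex_space smul"
    and "\<exists>e::'e. e \<noteq> 0"
    and "\<forall>F\<in>CXE X. T F \<in> CXE Y"
    and "\<forall>F\<in>CXE X. \<forall>G\<in>CXE X.
           Ran Y (\<lambda>y. T F y - T G y) \<subseteq> Ran X (\<lambda>x. F x - G x)"
  shows "(\<exists>\<phi>. continuous_map Y X \<phi> \<and>
            (\<forall>F\<in>CXE X. \<forall>y\<in>topspace Y. T F y = T (\<lambda>x. 0) y + F (\<phi> y)))
       \<and> ((\<forall>y\<in>topspace Y. T (\<lambda>x. 0) y = 0) \<longrightarrow>
            (\<forall>F\<in>CXE X. \<forall>G\<in>CXE X. \<forall>a b. \<forall>y\<in>topspace Y.
               T (\<lambda>x. smul a (F x) + smul b (G x)) y = smul a (T F y) + smul b (T G y)))"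
proof -
  note lcs = assms(7)
  obtain e :: 'e where e: "e \<noteq> 0"
    using assms(8) by blast
  obtain \<phi> where \<phi>: "\<phi> \<in> topspace Y \<rightarrow> topspace X"
    and T_eq: "\<And>F y. F \<in> CXE X \<Longrightarrow> y \<in> topspace Y \<Longrightarrow> T F y = T (\<lambda>x. 0) y + F (\<phi> y)"
    by (rule ran_diff_operator_pointwise_eval[OF lcs e assms(2,3,10)]) blast
  have "continuous_map Y X \<phi>"
  proof (rule continuous_map_if_comp_CXE[OF lcs e _ \<phi>])
    show "completely_regular_space X"
      by (rule compact_Hausdorff_imp_completely_regular_space[OF assms(2,3)])
    fix F :: "'a \<Rightarrow> 'e"
    assume "continuous_map X euclidean F"
    then have F: "F \<in> CXE X"
      by (simp add: CXE_def)
    with assms(9) have "continuous_map Y euclidean (\<lambda>y. T F y - T (\<lambda>x. 0) y)"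
      by (intro continuous_map_lcs_diff[OF lcs]) (auto simp: CXE_def)
    then show "continuous_map Y euclidean (F \<circ> \<phi>)"
      by (rule continuous_map_eq) (simp add: T_eq[OF F])
  qed
  moreover have "T (\<lambda>x. smul a (F x) + smul b (G x)) y = smul a (T F y) + smul b (T G y)"
    if "\<forall>y\<in>topspace Y. T (\<lambda>x. 0) y = 0" "F \<in> CXE X" "G \<in> CXE X" "y \<in> topspace Y" for F G a b y
  proof -
    have "(\<lambda>x. smul a (F x) + smul b (G x)) \<in> CXE X"
      using that(2,3) unfolding CXE_def
      by (simp add: continuous_map_lcs_add[OF lcs] continuous_map_lcs_scale[OF lcs])
    from T_eq[OF this that(4)] T_eq[OF that(2,4)] T_eq[OF that(3,4)] that(1,4) show ?thesis
      by simp
  qed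
  ultimately show ?thesis
    using T_eq by blast
qed

end
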